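(* Let $s\in\mathcal{Q}=\mathbb{Q}^{\geq0}\cup\{\infty\}$, written $s=q/p$ with $p,q\in\mathbb{N}$ coprime ($\infty=1/0$). Then $P^s_{p-1}\in J_s$ and $Q^s_{q-1}\in J_s$, and $$J_s=\left\langle\{P^s_i\mid 0\leq i<p\}\cup\{Q^s_j\mid 0\leq j<q\}\right\rangle_s .$$
   Context: $J_s=\{(\alpha,\beta)\in\mathbb{Z}^2:\ \alpha\equiv q,\ \beta\equiv p \pmod 2;\ \alpha\geq-q;\ \beta\geq-p;\ \alpha+\beta\leq p+q-2;\ p\alpha+q\beta\geq0\}$. $Z_s=(q,p)+2\mathbb{Z}^2$. $P^s_i=(q+2i,-p)$ and $Q^s_j=(-q,p+2j)$ for $i,j\in\mathbb{Z}$. For $U\subset Z_s$, $\langle U\rangle_s$ denotes the intersection with $Z_s$ of the convex hull of $U$ in $\mathbb{R}^2$. *)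

theory Defs
  imports "HOL-Analysis.Analysis"
begin

text \<open>Parameters: s = q/p with p, q natural numbers, coprime (s = infinity is p = 0, q = 1).\<close>

definition J_s :: "nat \<Rightarrow> nat \<Rightarrow> (int \<times> int) set" where
  "J_s p q = {(a, b). a mod 2 = int q mod 2 \<and> b mod 2 = int p mod 2 \<and>
      a \<ge> - int q \<and> b \<ge> - int p \<and> a + b \<le> int p + int q - 2 \<and>
      int p * a + int q * b \<ge> 0}"

definition Z_s :: "nat \<Rightarrow> nat \<Rightarrow> (int \<times> int) set" where
  "Z_s p q = {(a, b). a mod 2 = int q mod 2 \<and> b mod 2 = int p mod 2}"

definition P_s :: "nat \<Rightarrow> nat \<Rightarrow> int \<Rightarrow> int \<times> int" where
  "P_s p q i = (int q + 2 * i, - int p)"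

definition Q_s :: "nat \<Rightarrow> nat \<Rightarrow> int \<Rightarrow> int \<times> int" where
  "Q_s p q j = (- int q, int p + 2 * j)"

definition to_R2 :: "int \<times> int \<Rightarrow> real \<times> real" where
  "to_R2 z = (real_of_int (fst z), real_of_int (snd z))"

definition hull_s :: "nat \<Rightarrow> nat \<Rightarrow> (int \<times> int) set \<Rightarrow> (int \<times> int) set" where
  "hull_s p q U = {z \<in> Z_s p q. to_R2 z \<in> convex hull (to_R2 ` U)}"

end

theory Submission
  imports Defs
begin

text \<open>Over the reals the four inequalities defining \<open>J\<^sub>s\<close> cut out the quadrilateral with
  vertices \<open>P\<^sub>0, P\<^sub>p\<^sub>-\<^sub>1, Q\<^sub>q\<^sub>-\<^sub>1, Q\<^sub>0\<close>, and every generator satisfies them. Conversely a point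
  of the quadrilateral lies on the ray from the corner \<open>(-q, -p)\<close> between the points where
  this ray crosses the edges \<open>P\<^sub>0Q\<^sub>0\<close> (on \<open>p x + q y = 0\<close>) and
  \<open>P\<^sub>p\<^sub>-\<^sub>1Q\<^sub>q\<^sub>-\<^sub>1\<close> (on \<open>x + y = p + q - 2\<close>), hence in the convex hull of the four vertices.
  Coprimality only rules out \<open>p = q = 0\<close> and collapses the cases \<open>p = 0\<close>, \<open>q = 0\<close> to a single
  point.\<close>

definition J_poly :: "nat \<Rightarrow> nat \<Rightarrow> (real \<times> real) set" where
  "J_poly p q = {(x, y). - real q \<le> x \<and> - real p \<le> y \<and> x + y \<le> real p + real q - 2 \<and>
      0 \<le> real p * x + real q * y}"

lemma convex_J_poly: "convex (J_poly p q)"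
proof -
  have "J_poly p q = {z. (1, 0) \<bullet> z \<ge> - real q} \<inter> {z. (0, 1) \<bullet> z \<ge> - real p}
      \<inter> {z. (1, 1) \<bullet> z \<le> real p + real q - 2} \<inter> {z. (real p, real q) \<bullet> z \<ge> 0}"
    by (auto simp: J_poly_def inner_prod_def)
  then show ?thesis
    by (simp add: convex_Int convex_halfspace_ge convex_halfspace_le)
qed

lemma to_R2_mem_J_poly_iff:
  "to_R2 (a, b) \<in> J_poly p q \<longleftrightarrow>
    - int q \<le> a \<and> - int p \<le> b \<and> a + b \<le> int p + int q - 2 \<and> 0 \<le> int p * a + int q * b"
proof -
  have "to_R2 (a, b) \<in> J_poly p q \<longleftrightarrow>
      of_int (- int q) \<le> (of_int a :: real) \<and> of_int (- int p) \<le> (of_int b :: real) \<and>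
      of_int (a + b) \<le> (of_int (int p + int q - 2) :: real) \<and>
      (0 :: real) \<le> of_int (int p * a + int q * b)"
    by (simp add: J_poly_def to_R2_def)
  then show ?thesis
    by (simp only: of_int_le_iff of_int_0_le_iff)
qed

lemma J_s_eq: "J_s p q = {z \<in> Z_s p q. to_R2 z \<in> J_poly p q}"
  by (auto simp: J_s_def Z_s_def to_R2_mem_J_poly_iff)

lemma P_s_last_mem_J_s:
  assumes "0 < p + q"
  shows "P_s p q (int p - 1) \<in> J_s p q"
proof -
  have "int p * (int q + 2 * (int p - 1)) + int q * - int p = 2 * int p * (int p - 1)"
    by (simp add: algebra_simps)
  moreover have "0 \<le> 2 * int p * (int p - 1)"
    by (cases "p = 0") simp_all
  moreover have "1 \<le> int p + int q"
    using assms by linarith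
  moreover have "(int q + 2 * (int p - 1)) mod 2 = int q mod 2" "- int p mod 2 = int p mod 2"
    by presburger+
  ultimately show ?thesis
    by (simp add: P_s_def J_s_def)
qed

lemma Q_s_last_mem_J_s:
  assumes "0 < p + q"
  shows "Q_s p q (int q - 1) \<in> J_s p q"
proof -
  have "int p * - int q + int q * (int p + 2 * (int q - 1)) = 2 * int q * (int q - 1)"
    by (simp add: algebra_simps)
  moreover have "0 \<le> 2 * int q * (int q - 1)"
    by (cases "q = 0") simp_all
  moreover have "1 \<le> int p + int q"
    using assms by linarith
  moreover have "(int p + 2 * (int q - 1)) mod 2 = int p mod 2" "- int q mod 2 = int q mod 2"
    by presburger+
  ultimately show ?thesis
    by (simp add: Q_s_def J_s_def)
qed

lemma mem_closed_segment_scaled: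
  fixes v :: "'a::real_vector" and \<alpha> \<beta> :: real
  assumes "\<alpha> \<le> 1" "1 \<le> \<beta>"
  shows "v \<in> closed_segment (\<alpha> *\<^sub>R v) (\<beta> *\<^sub>R v)"
proof (cases "\<alpha> = \<beta>")
  case True
  with assms show ?thesis by simp
next
  case False
  define u where "u = (1 - \<alpha>) / (\<beta> - \<alpha>)"
  have "u * (\<beta> - \<alpha>) = 1 - \<alpha>"
    using False by (simp add: u_def)
  then have "(1 - u) * \<alpha> + u * \<beta> = 1"
    by (simp add: algebra_simps)
  then have "v = (1 - u) *\<^sub>R \<alpha> *\<^sub>R v + u *\<^sub>R \<beta> *\<^sub>R v"
    by (metis scaleR_left_distrib scaleR_one scaleR_scaleR)
  moreover have "0 \<le> u" "u \<le> 1"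
    using assms False by (auto simp: u_def field_simps)
  ultimately show ?thesis by (auto simp: in_segment)
qed

lemma mem_closed_segment_axes:
  fixes a b c X Y :: real
  assumes "0 < a" "0 < b" "0 \<le> X" "0 \<le> Y" "a * X + b * Y = c"
  shows "(X, Y) \<in> closed_segment (c / a, 0) (0, c / b)"
proof -
  have aX: "0 \<le> a * X" and bY: "0 \<le> b * Y"
    using assms by simp_all
  show ?thesis
  proof (cases "c = 0")
    case True
    with assms aX bY have "a * X = 0" "b * Y = 0"
      by linarith+
    with assms True show ?thesis
      by simp
  next
    case False
    with assms aX bY have "0 < c"
      by linarith
    define u where "u = b * Y / c"
    have "b * Y \<le> c"
      using assms aX by linarith
    with \<open>0 < c\<close> bY have "0 \<le> u" "u \<le> 1"
      by (simp_all add: u_def)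
    moreover have "1 - u = a * X / c"
      using \<open>0 < c\<close> assms by (simp add: u_def field_simps)
    then have "(X, Y) = (1 - u) *\<^sub>R (c / a, 0) + u *\<^sub>R (0, c / b)"
      using assms \<open>0 < c\<close> by (simp add: u_def)
    ultimately show ?thesis
      by (auto simp: in_segment)
  qed
qed

lemma truncated_quadrant_subset_convex_hull:
  fixes a b c d X Y :: real
  assumes "0 < a" "0 < b" "0 < c" "0 \<le> X" "0 \<le> Y" "c \<le> a * X + b * Y" "X + Y \<le> d"
  shows "(X, Y) \<in> convex hull {(c / a, 0), (0, c / b), (d, 0), (0, d)}"
    (is "_ \<in> convex hull ?V")
proof -
  have "0 < a * X + b * Y"
    using assms by linarith
  have "0 < X + Y"
  proof (rule ccontr)
    assume "\<not> 0 < X + Y"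
    with assms have "X = 0" "Y = 0"
      by linarith+
    with \<open>0 < a * X + b * Y\<close> show False
      by simp
  qed
  define \<alpha> where "\<alpha> = c / (a * X + b * Y)"
  define \<beta> where "\<beta> = d / (X + Y)"
  have "a * (\<alpha> * X) + b * (\<alpha> * Y) = \<alpha> * (a * X + b * Y)"
    by (simp add: algebra_simps)
  also have "\<dots> = c"
    using \<open>0 < a * X + b * Y\<close> by (simp add: \<alpha>_def)
  finally have inner: "\<alpha> *\<^sub>R (X, Y) \<in> closed_segment (c / a, 0) (0, c / b)"
    using mem_closed_segment_axes[of a b "\<alpha> * X" "\<alpha> * Y" c] assms \<open>0 < a * X + b * Y\<close>
    by (simp add: \<alpha>_def)
  have "\<beta> * X + \<beta> * Y = \<beta> * (X + Y)"
    by (simp add: distrib_left)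
  also have "\<dots> = d"
    using \<open>0 < X + Y\<close> by (simp add: \<beta>_def)
  finally have outer: "\<beta> *\<^sub>R (X, Y) \<in> closed_segment (d, 0) (0, d)"
    using mem_closed_segment_axes[of 1 1 "\<beta> * X" "\<beta> * Y" d] assms \<open>0 < X + Y\<close>
    by (simp add: \<beta>_def)
  have "(X, Y) \<in> closed_segment (\<alpha> *\<^sub>R (X, Y)) (\<beta> *\<^sub>R (X, Y))"
    using assms \<open>0 < a * X + b * Y\<close> \<open>0 < X + Y\<close>
    by (intro mem_closed_segment_scaled) (simp_all add: \<alpha>_def \<beta>_def)
  moreover have "closed_segment (\<alpha> *\<^sub>R (X, Y)) (\<beta> *\<^sub>R (X, Y)) \<subseteq> convex hull ?V"
  proof (rule closed_segment_subset_convex_hull)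
    have "closed_segment (c / a, 0) (0, c / b) \<subseteq> convex hull ?V"
      "closed_segment (d, 0) (0, d) \<subseteq> convex hull ?V"
      by (simp_all add: closed_segment_subset_convex_hull hull_inc)
    with inner outer show "\<alpha> *\<^sub>R (X, Y) \<in> convex hull ?V" "\<beta> *\<^sub>R (X, Y) \<in> convex hull ?V"
      by blast+
  qed
  ultimately show ?thesis
    by blast
qed

lemma J_poly_subset_convex_hull_corners:
  assumes "0 < p" "0 < q"
  shows "J_poly p q \<subseteq> convex hull {(real q, - real p), (- real q, real p),
    (2 * real p + real q - 2, - real p), (- real q, real p + 2 * real q - 2)}"
    (is "_ \<subseteq> convex hull ?C")
proof
  fix z assume "z \<in> J_poly p q"
  then obtain x y where z: "z = (x, y)" and J: "- real q \<le> x" "- real p \<le> y"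
    "x + y \<le> real p + real q - 2" "0 \<le> real p * x + real q * y"
    by (auto simp: J_poly_def)
  let ?o = "(- real q, - real p)"
  let ?V = "{(2 * real q, 0), (0, 2 * real p), (2 * real p + 2 * real q - 2, 0),
    (0, 2 * real p + 2 * real q - 2)}"
  have "(x + q, y + p) \<in> convex hull {(2 * real p * real q / real p, 0),
      (0, 2 * real p * real q / real q), (2 * real p + 2 * real q - 2, 0),
      (0, 2 * real p + 2 * real q - 2)}"
    using assms J by (intro truncated_quadrant_subset_convex_hull) (auto simp: algebra_simps)
  then have z_image: "z \<in> (\<lambda>w. ?o + w) ` (convex hull ?V)"
    using assms by (auto simp: z intro!: image_eqI[where x = "(x + q, y + p)"])
  have translate_V: "(\<lambda>w. ?o + w) ` ?V = ?C"
    by (simp add: algebra_simps)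
  have "convex hull ?C = (\<lambda>w. ?o + w) ` (convex hull ?V)"
    using convex_hull_translation[of ?o ?V] by (simp only: translate_V)
  with z_image show "z \<in> convex hull ?C"
    by (simp only:)
qed

definition J_generators :: "nat \<Rightarrow> nat \<Rightarrow> (int \<times> int) set" where
  "J_generators p q = {P_s p q (int i) | i. i < p} \<union> {Q_s p q (int j) | j. j < q}"

lemma J_generators_subset_J_poly: "to_R2 ` J_generators p q \<subseteq> J_poly p q"
proof -
  have "to_R2 (P_s p q (int i)) \<in> J_poly p q" if "i < p" for i
  proof -
    have "real i \<le> real p - 1" using that by linarith
    then show ?thesis by (simp add: J_poly_def to_R2_def P_s_def algebra_simps)
  qed
  moreover have "to_R2 (Q_s p q (int j)) \<in> J_poly p q" if "j < q" for j
  proof -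
    have "real j \<le> real q - 1" using that by linarith
    then show ?thesis by (simp add: J_poly_def to_R2_def Q_s_def algebra_simps)
  qed
  ultimately show ?thesis by (auto simp: J_generators_def)
qed

lemma convex_hull_J_generators:
  assumes "coprime p q"
  shows "convex hull (to_R2 ` J_generators p q) = J_poly p q"
proof
  show "convex hull (to_R2 ` J_generators p q) \<subseteq> J_poly p q"
    by (intro hull_minimal J_generators_subset_J_poly convex_J_poly)
next
  have P: "to_R2 (P_s p q (int i)) \<in> convex hull (to_R2 ` J_generators p q)" if "i < p" for i
    using that by (intro hull_inc imageI) (auto simp: J_generators_def)
  have Q: "to_R2 (Q_s p q (int j)) \<in> convex hull (to_R2 ` J_generators p q)" if "j < q" for j
    using that by (intro hull_inc imageI) (auto simp: J_generators_def)
  consider "p = 0" "q = 1" | "q = 0" "p = 1" | "0 < p" "0 < q"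
    using assms by fastforce
  then show "J_poly p q \<subseteq> convex hull (to_R2 ` J_generators p q)"
  proof cases
    case 1
    then have "J_poly p q = {to_R2 (Q_s p q 0)}"
      by (auto simp: J_poly_def to_R2_def Q_s_def)
    with 1 Q[of 0] show ?thesis by simp
  next
    case 2
    then have "J_poly p q = {to_R2 (P_s p q 0)}"
      by (auto simp: J_poly_def to_R2_def P_s_def)
    with 2 P[of 0] show ?thesis by simp
  next
    case 3
    let ?H = "convex hull (to_R2 ` J_generators p q)"
    have "(real q, - real p) \<in> ?H" "(- real q, real p) \<in> ?H"
      using 3 P[of 0] Q[of 0] by (simp_all add: to_R2_def P_s_def Q_s_def)
    moreover have "(2 * real p + real q - 2, - real p) \<in> ?H"
      using 3 P[of "p - 1"] by (simp add: to_R2_def P_s_def of_nat_diff algebra_simps)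
    moreover have "(- real q, real p + 2 * real q - 2) \<in> ?H"
      using 3 Q[of "q - 1"] by (simp add: to_R2_def Q_s_def of_nat_diff algebra_simps)
    ultimately have "convex hull {(real q, - real p), (- real q, real p),
        (2 * real p + real q - 2, - real p), (- real q, real p + 2 * real q - 2)} \<subseteq> ?H"
      by (intro convex_hull_subset) (simp only: insert_subset empty_subsetI simp_thms)
    with J_poly_subset_convex_hull_corners[OF 3] show ?thesis
      by (rule order.trans)
  qed
qed

theorem lemma4:
  fixes p q :: nat
  assumes "coprime p q"
  shows "P_s p q (int p - 1) \<in> J_s p q \<and> Q_s p q (int q - 1) \<in> J_s p q \<and>
    J_s p q = hull_s p q ({P_s p q (int i) | i. i < p} \<union> {Q_s p q (int j) | j. j < q})"
proof -
  have pos: "0 < p + q"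
    using assms by (cases "p + q") auto
  have "J_s p q = hull_s p q (J_generators p q)"
    by (simp add: J_s_eq hull_s_def convex_hull_J_generators[OF assms])
  then show ?thesis
    unfolding J_generators_def using P_s_last_mem_J_s[OF pos] Q_s_last_mem_J_s[OF pos] by blast
qed

end
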